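(* Let $0<H<1$, $H\neq 1/2$, $\lambda>0$, $\tau>0$, $h>0$, $l>0$, $L>0$, $L'>0$, and let $K_\nu(s)=\frac12\int_0^\infty z^{\nu-1}\exp[-\frac{s}{2}(z+\frac1z)]\,dz$ for $s>0$. Let $(t_k)_{k\ge1}$ be positive times and, for each $k\ge0$, let $r_k$ be either $$r_k=\frac{\Gamma(H+1/2)}{2H\sqrt{\pi}(2\lambda)^H}\,\lambda\, t_{k+1}^{1-H}K_{H-1}(\lambda t_{k+1})\,\tau \quad\text{or}\quad r_k=\frac{\Gamma(H+1/2)}{H\sqrt{\pi}(2\lambda)^H}\,\lambda\, t_{k+1}K_{H-1}(\lambda t_{k+1})\,\tau$$ (the first choice being used for all $k$ when $0<H<1/2$; when $1/2<H<1$ the first choice is used for $k\le k_1$ and the second for $k> k_1$, for some index $k_1$). Let $u^0,u^1,u^2,\dots$ be functions in $L^2$ of the periodic domain $[0,L)\times[0,L')$ (i.e. $L$-periodic in $x$ and $L'$-periodic in $y$) satisfying, for all $k\ge0$ and all $(x,y)$, the implicit difference relation $$\Big(1+\frac{2r_k}{h^2}+\frac{2r_k}{l^2}\Big)u^{k+1}(x,y)-\frac{r_k}{h^2}\big(u^{k+1}(x+h,y)+u^{k+1}(x-h,y)\big)-\frac{r_k}{l^2}\big(u^{k+1}(x,y+l)+u^{k+1}(x,y-l)\big)=u^k(x,y).$$ Then the scheme is unconditionally stable: for every $k\ge0$ (and every $\tau,h,l>0$), $$\|u^k\|_{L^2}^2\le\|u^0\|_{L^2}^2 .$$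
   Context: This is the finite-difference scheme for the equation $\partial_t u=\frac{\Gamma(H+1/2)}{\sqrt{\pi}(2\lambda)^H}\lambda t^H K_{H-1}(\lambda t)(\partial_x^2+\partial_y^2)u$ (Fokker–Planck equation of tempered fractional Brownian motion), discretized implicitly in the variable $t^{2H}$ (nonuniform mesh $t_k=(\tau k)^{1/(2H)}$, so that $t_{k+1}^{2H}-t_k^{2H}=\tau$) and, in the case $1/2<H<1$ after the index $k_1$, in the variable $t^{H}$ (with step $\tau$ in $t^H$). Stability is in the sense of the Fourier (von Neumann) method: $\|\cdot\|_{L^2}$ is the $L^2$ norm over $[0,L)\times[0,L')$. Note $K_{H-1}(s)>0$ for $s>0$, so $r_k>0$. *)

theory Defs
  imports "HOL-Analysis.Analysis"
begin

definition BesselK :: "real \<Rightarrow> real \<Rightarrow> real" where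
  "BesselK nu s = (1/2) * set_lebesgue_integral lborel {0<..}
      (\<lambda>z. z powr (nu - 1) * exp (- (s/2) * (z + 1/z)))"

definition r_first :: "real \<Rightarrow> real \<Rightarrow> real \<Rightarrow> real \<Rightarrow> real" where
  "r_first H lam tau t = Gamma (H + 1/2) / (2 * H * sqrt pi * (2 * lam) powr H)
      * lam * t powr (1 - H) * BesselK (H - 1) (lam * t) * tau"

definition r_second :: "real \<Rightarrow> real \<Rightarrow> real \<Rightarrow> real \<Rightarrow> real" where
  "r_second H lam tau t = Gamma (H + 1/2) / (H * sqrt pi * (2 * lam) powr H)
      * lam * t * BesselK (H - 1) (lam * t) * tau"

definition L2sq :: "real \<Rightarrow> real \<Rightarrow> (real \<Rightarrow> real \<Rightarrow> real) \<Rightarrow> real" where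
  "L2sq L L' f = set_lebesgue_integral lborel ({0..<L} \<times> {0..<L'})
      (\<lambda>p. (f (fst p) (snd p))\<^sup>2)"

end

theory Submission
  imports Defs "HOL-Library.Periodic_Fun"
begin

text \<open>Energy method. With \<open>a = r\<^sub>k/h\<^sup>2\<close>, \<open>b = r\<^sub>k/l\<^sup>2\<close> (nonnegative, since \<open>K\<^sub>\<nu> \<ge> 0\<close>),
  \<open>v = u\<^sup>k\<^sup>+\<^sup>1\<close> and \<open>w = u\<^sup>k\<close>, the scheme reads
  \<open>w = (1 + 2a + 2b) v - a (v\<^sub>x\<^sub>+ + v\<^sub>x\<^sub>-) - b (v\<^sub>y\<^sub>+ + v\<^sub>y\<^sub>-)\<close> in terms of the four shifted copies of \<open>v\<close>,
  and then \<open>w\<^sup>2/2 + a/2 (v\<^sub>x\<^sub>+\<^sup>2 + v\<^sub>x\<^sub>-\<^sup>2) + b/2 (v\<^sub>y\<^sub>+\<^sup>2 + v\<^sub>y\<^sub>-\<^sup>2) - (1/2 + a + b) v\<^sup>2\<close> is a sum of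
  squares. Integrated over the periodicity cell, each shifted square has the same integral as \<open>v\<^sup>2\<close>,
  so the \<open>a\<close> and \<open>b\<close> terms cancel and \<open>\<parallel>u\<^sup>k\<^sup>+\<^sup>1\<parallel>\<^sup>2 \<le> \<parallel>u\<^sup>k\<parallel>\<^sup>2\<close>.\<close>

lemma nn_integral_periodic_shift:
  fixes g :: "real \<Rightarrow> ennreal"
  assumes [measurable]: "g \<in> borel_measurable borel" and L: "L > 0"
    and per: "\<And>x. g (x + L) = g x"
  shows "(\<integral>\<^sup>+x. indicator {0..<L} x * g (x + c) \<partial>lborel) = (\<integral>\<^sup>+x. indicator {0..<L} x * g x \<partial>lborel)"
proof -
  interpret periodic_fun_simple g L by standard (rule per)
  \<comment> \<open>Reduce \<open>c\<close> mod \<open>L\<close> to \<open>a \<in> [0, L)\<close>; the window \<open>[a, L + a)\<close> is \<open>[a, L)\<close> together with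
     \<open>[L, L + a)\<close>, a period-translate of \<open>[0, a)\<close>.\<close>
  define a where "a = c - of_int \<lfloor>c / L\<rfloor> * L"
  have a: "0 \<le> a" "a < L"
    using floor_divide_lower[OF L, of c] floor_divide_upper[OF L, of c]
    unfolding a_def by (simp_all add: algebra_simps)
  have "g (x + c) = g (a + x)" for x
    using plus_of_int[of "a + x" "\<lfloor>c / L\<rfloor>"] by (simp add: a_def algebra_simps)
  then have "(\<integral>\<^sup>+x. indicator {0..<L} x * g (x + c) \<partial>lborel) = (\<integral>\<^sup>+x. indicator {0..<L} x * g (a + x) \<partial>lborel)"
    by simp
  also have "\<dots> = (\<integral>\<^sup>+x. indicator {a..<L+a} x * g x \<partial>lborel)"
    using nn_integral_real_affine[of "\<lambda>x. indicator {a..<L+a} x * g x" 1 a]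
    by (simp add: indicator_def)
  also have "\<dots> = (\<integral>\<^sup>+x. indicator {a..<L} x * g x + indicator {L..<L+a} x * g x \<partial>lborel)"
    using a by (intro nn_integral_cong) (auto simp: indicator_def)
  also have "\<dots> = (\<integral>\<^sup>+x. indicator {a..<L} x * g x \<partial>lborel) + (\<integral>\<^sup>+x. indicator {L..<L+a} x * g x \<partial>lborel)"
    by (rule nn_integral_add) auto
  also have "(\<integral>\<^sup>+x. indicator {L..<L+a} x * g x \<partial>lborel) = (\<integral>\<^sup>+x. indicator {0..<a} x * g x \<partial>lborel)"
    using nn_integral_real_affine[of "\<lambda>x. indicator {L..<L+a} x * g x" 1 L]
    by (simp add: indicator_def add.commute[of L] per)
  also have "(\<integral>\<^sup>+x. indicator {a..<L} x * g x \<partial>lborel) + (\<integral>\<^sup>+x. indicator {0..<a} x * g x \<partial>lborel)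
      = (\<integral>\<^sup>+x. indicator {a..<L} x * g x + indicator {0..<a} x * g x \<partial>lborel)"
    by (rule nn_integral_add[symmetric]) auto
  also have "\<dots> = (\<integral>\<^sup>+x. indicator {0..<L} x * g x \<partial>lborel)"
    using a by (intro nn_integral_cong) (auto simp: indicator_def)
  finally show ?thesis .
qed

lemma nn_integral_rectangle_iterated:
  fixes G :: "real \<times> real \<Rightarrow> ennreal"
  assumes [measurable]: "G \<in> borel_measurable borel" "A \<in> sets borel" "B \<in> sets borel"
  shows "(\<integral>\<^sup>+p. indicator (A \<times> B) p * G p \<partial>lborel)
           = (\<integral>\<^sup>+y. indicator B y * (\<integral>\<^sup>+x. indicator A x * G (x, y) \<partial>lborel) \<partial>lborel)"
    and "(\<integral>\<^sup>+p. indicator (A \<times> B) p * G p \<partial>lborel)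
           = (\<integral>\<^sup>+x. indicator A x * (\<integral>\<^sup>+y. indicator B y * G (x, y) \<partial>lborel) \<partial>lborel)"
proof -
  have [measurable]: "A \<times> B \<in> sets borel"
    by (rule borel_Times) simp_all
  have m: "(\<lambda>p. indicator (A \<times> B) p * G p) \<in> borel_measurable (lborel \<Otimes>\<^sub>M lborel)"
    unfolding lborel_prod by simp
  show "(\<integral>\<^sup>+p. indicator (A \<times> B) p * G p \<partial>lborel)
           = (\<integral>\<^sup>+y. indicator B y * (\<integral>\<^sup>+x. indicator A x * G (x, y) \<partial>lborel) \<partial>lborel)"
    using lborel_pair.nn_integral_snd[OF m]
    by (subst (asm) lborel_prod) (auto simp: indicator_times mult_ac nn_integral_cmult[symmetric] intro!: nn_integral_cong)
  show "(\<integral>\<^sup>+p. indicator (A \<times> B) p * G p \<partial>lborel)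
           = (\<integral>\<^sup>+x. indicator A x * (\<integral>\<^sup>+y. indicator B y * G (x, y) \<partial>lborel) \<partial>lborel)"
    using lborel.nn_integral_fst[OF m]
    by (subst (asm) lborel_prod) (auto simp: indicator_times mult_ac nn_integral_cmult[symmetric] intro!: nn_integral_cong)
qed

lemma nn_integral_cell_periodic_shift:
  fixes F :: "real \<Rightarrow> real \<Rightarrow> ennreal"
  assumes F: "(\<lambda>p. F (fst p) (snd p)) \<in> borel_measurable borel" and L: "L > 0" and L': "L' > 0"
    and perx: "\<And>x y. F (x + L) y = F x y" and pery: "\<And>x y. F x (y + L') = F x y"
  shows "(\<integral>\<^sup>+p. indicator ({0..<L} \<times> {0..<L'}) p * F (fst p + c) (snd p + d) \<partial>lborel)
       = (\<integral>\<^sup>+p. indicator ({0..<L} \<times> {0..<L'}) p * F (fst p) (snd p) \<partial>lborel)"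
proof -
  have shifted_measurable: "(\<lambda>p. F (fst p + c') (snd p + d')) \<in> borel_measurable borel" for c' d'
    using measurable_compose[OF _ F, of "\<lambda>p. (fst p + c', snd p + d')"]
    by (simp add: borel_measurable_continuous_onI continuous_intros)
  have x_section: "(\<lambda>x. F x y) \<in> borel_measurable borel" for y
    using measurable_compose[OF _ F, of "\<lambda>x. (x, y)"] by simp
  have y_section: "(\<lambda>y. F x y) \<in> borel_measurable borel" for x
    using measurable_compose[OF _ F, of "\<lambda>y. (x, y)"] by simp
  have "(\<integral>\<^sup>+p. indicator ({0..<L} \<times> {0..<L'}) p * F (fst p + c) (snd p + d) \<partial>lborel)
      = (\<integral>\<^sup>+y. indicator {0..<L'} y * (\<integral>\<^sup>+x. indicator {0..<L} x * F (x + c) (y + d) \<partial>lborel) \<partial>lborel)"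
    using nn_integral_rectangle_iterated(1)[OF shifted_measurable] by simp
  also have "\<dots> = (\<integral>\<^sup>+y. indicator {0..<L'} y * (\<integral>\<^sup>+x. indicator {0..<L} x * F x (y + d) \<partial>lborel) \<partial>lborel)"
    using nn_integral_periodic_shift[OF x_section L perx] by simp
  also have "\<dots> = (\<integral>\<^sup>+x. indicator {0..<L} x * (\<integral>\<^sup>+y. indicator {0..<L'} y * F x (y + d) \<partial>lborel) \<partial>lborel)"
    using nn_integral_rectangle_iterated[OF shifted_measurable[of 0 d]] by simp
  also have "\<dots> = (\<integral>\<^sup>+x. indicator {0..<L} x * (\<integral>\<^sup>+y. indicator {0..<L'} y * F x y \<partial>lborel) \<partial>lborel)"
    using nn_integral_periodic_shift[OF y_section L' pery] by simp
  also have "\<dots> = (\<integral>\<^sup>+p. indicator ({0..<L} \<times> {0..<L'}) p * F (fst p) (snd p) \<partial>lborel)"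
    using nn_integral_rectangle_iterated(2)[OF F] by simp
  finally show ?thesis .
qed

lemma set_integral_eq_if_nn_integral_eq:
  fixes f g :: "'a \<Rightarrow> real"
  assumes [measurable]: "f \<in> borel_measurable M" "g \<in> borel_measurable M" "C \<in> sets M"
    and f_nonneg: "\<And>x. f x \<ge> 0" and g_nonneg: "\<And>x. g x \<ge> 0"
    and g: "set_integrable M C g"
    and eq: "(\<integral>\<^sup>+x. indicator C x * ennreal (f x) \<partial>M) = (\<integral>\<^sup>+x. indicator C x * ennreal (g x) \<partial>M)"
  shows "set_integrable M C f" and "(LINT x:C|M. f x) = (LINT x:C|M. g x)"
proof -
  have ind: "ennreal (indicator C x * y) = indicator C x * ennreal y" for y :: real and x
    by (auto simp: indicator_def)
  have "(\<integral>\<^sup>+x. ennreal (indicator C x *\<^sub>R g x) \<partial>M) = ennreal (LINT x:C|M. g x)"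
    using g g_nonneg unfolding set_integrable_def set_lebesgue_integral_def
    by (intro nn_integral_eq_integral) auto
  then show "set_integrable M C f"
    unfolding set_integrable_def using eq f_nonneg
    by (intro integrableI_nn_integral_finite[where x="LINT x:C|M. g x"]) (auto simp: ind)
  show "(LINT x:C|M. f x) = (LINT x:C|M. g x)"
    unfolding set_lebesgue_integral_def
    by (subst (1 2) integral_eq_nn_integral) (auto simp: ind eq f_nonneg g_nonneg)
qed

lemma set_integral_cell_periodic_shift:
  fixes f :: "real \<Rightarrow> real \<Rightarrow> real" and L L' :: real
  defines "C \<equiv> {0..<L} \<times> {0..<L'}"
  assumes f: "(\<lambda>p. f (fst p) (snd p)) \<in> borel_measurable borel" and L: "L > 0" and L': "L' > 0"
    and nonneg: "\<And>x y. f x y \<ge> 0"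
    and perx: "\<And>x y. f (x + L) y = f x y" and pery: "\<And>x y. f x (y + L') = f x y"
    and int: "set_integrable lborel C (\<lambda>p. f (fst p) (snd p))"
  shows "set_integrable lborel C (\<lambda>p. f (fst p + c) (snd p + d))"
    and "(LINT p:C|lborel. f (fst p + c) (snd p + d)) = (LINT p:C|lborel. f (fst p) (snd p))"
proof -
  have shifted: "(\<lambda>p. f (fst p + c) (snd p + d)) \<in> borel_measurable borel"
    using measurable_compose[OF _ f, of "\<lambda>p. (fst p + c, snd p + d)"]
    by (simp add: borel_measurable_continuous_onI continuous_intros)
  have "C \<in> sets lborel"
    unfolding C_def by (simp add: borel_Times)
  note transfer = set_integral_eq_if_nn_integral_eq[OF shifted[unfolded measurable_lborel2[symmetric]]
      f[unfolded measurable_lborel2[symmetric]] this nonneg nonneg int]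
  have "(\<integral>\<^sup>+p. indicator C p * ennreal (f (fst p + c) (snd p + d)) \<partial>lborel)
      = (\<integral>\<^sup>+p. indicator C p * ennreal (f (fst p) (snd p)) \<partial>lborel)"
    unfolding C_def using f
    by (intro nn_integral_cell_periodic_shift[OF _ L L']) (auto simp: perx pery)
  then show "set_integrable lborel C (\<lambda>p. f (fst p + c) (snd p + d))"
    and "(LINT p:C|lborel. f (fst p + c) (snd p + d)) = (LINT p:C|lborel. f (fst p) (snd p))"
    using transfer by auto
qed

lemma implicit_stencil_energy_ineq:
  fixes a b v w p1 p2 q1 q2 :: real
  assumes a: "a \<ge> 0" and b: "b \<ge> 0"
    and w: "w = (1 + 2*a + 2*b) * v - a * (p1 + p2) - b * (q1 + q2)"
  shows "(1/2 + a + b) * v\<^sup>2 \<le> 1/2 * w\<^sup>2 + a/2 * (p1\<^sup>2 + p2\<^sup>2) + b/2 * (q1\<^sup>2 + q2\<^sup>2)"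
proof -
  have "1/2 * w\<^sup>2 + a/2 * (p1\<^sup>2 + p2\<^sup>2) + b/2 * (q1\<^sup>2 + q2\<^sup>2) - (1/2 + a + b) * v\<^sup>2
     = 1/2 * (w - v)\<^sup>2 + a/2 * ((v - p1)\<^sup>2 + (v - p2)\<^sup>2) + b/2 * ((v - q1)\<^sup>2 + (v - q2)\<^sup>2)"
    unfolding w by (simp add: power2_eq_square field_simps)
  moreover have "0 \<le> 1/2 * (w - v)\<^sup>2 + a/2 * ((v - p1)\<^sup>2 + (v - p2)\<^sup>2) + b/2 * ((v - q1)\<^sup>2 + (v - q2)\<^sup>2)"
    using a b by (intro add_nonneg_nonneg mult_nonneg_nonneg) auto
  ultimately show ?thesis by linarith
qed

lemma L2sq_implicit_step_le:
  fixes v w :: "real \<Rightarrow> real \<Rightarrow> real" and a b h l L L' :: real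
  defines "C \<equiv> {0..<L} \<times> {0..<L'}"
  assumes a: "a \<ge> 0" and b: "b \<ge> 0" and L: "L > 0" and L': "L' > 0"
    and v_meas: "(\<lambda>p. v (fst p) (snd p)) \<in> borel_measurable borel"
    and v_int: "set_integrable lborel C (\<lambda>p. (v (fst p) (snd p))\<^sup>2)"
    and w_int: "set_integrable lborel C (\<lambda>p. (w (fst p) (snd p))\<^sup>2)"
    and perx: "\<And>x y. v (x + L) y = v x y" and pery: "\<And>x y. v x (y + L') = v x y"
    and step: "\<And>x y. (1 + 2*a + 2*b) * v x y - a * (v (x + h) y + v (x - h) y)
                       - b * (v x (y + l) + v x (y - l)) = w x y"
  shows "L2sq L L' v \<le> L2sq L L' w"
proof -
  define V where "V x y = (v x y)\<^sup>2" for x y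
  define W where "W x y = (w x y)\<^sup>2" for x y
  have V_meas: "(\<lambda>p. V (fst p) (snd p)) \<in> borel_measurable borel"
    unfolding V_def using v_meas by measurable
  have V_int: "set_integrable lborel C (\<lambda>p. V (fst p) (snd p))"
    using v_int unfolding V_def .
  have V_shift: "set_integrable lborel C (\<lambda>p. V (fst p + c) (snd p + d))"
    "(LINT p:C|lborel. V (fst p + c) (snd p + d)) = (LINT p:C|lborel. V (fst p) (snd p))" for c d
    using set_integral_cell_periodic_shift[OF V_meas L L' _ _ _ V_int[unfolded C_def], of c d]
    unfolding C_def V_def by (simp_all add: perx pery)
  define g where "g p = 1/2 * W (fst p) (snd p)
      + a/2 * (V (fst p + h) (snd p) + V (fst p - h) (snd p))
      + b/2 * (V (fst p) (snd p + l) + V (fst p) (snd p - l))" for p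
  note shifts = V_shift[of h 0] V_shift[of "-h" 0] V_shift[of 0 l] V_shift[of 0 "-l"]
  have g_int: "set_integrable lborel C g"
    unfolding g_def W_def using w_int shifts by (intro set_integral_add(1) set_integrable_mult_right) auto
  have "(1/2 + a + b) * (LINT p:C|lborel. V (fst p) (snd p)) = (LINT p:C|lborel. (1/2 + a + b) * V (fst p) (snd p))"
    by simp
  also have "\<dots> \<le> (LINT p:C|lborel. g p)"
  proof (rule set_integral_mono)
    show "set_integrable lborel C (\<lambda>p. (1/2 + a + b) * V (fst p) (snd p))"
      using v_int unfolding V_def by auto
    show "(1/2 + a + b) * V (fst p) (snd p) \<le> g p" for p
      using implicit_stencil_energy_ineq[OF a b step[symmetric]]
      unfolding g_def V_def W_def by simp
  qed (rule g_int)
  also have "\<dots> = 1/2 * (LINT p:C|lborel. W (fst p) (snd p)) + (a + b) * (LINT p:C|lborel. V (fst p) (snd p))"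
    unfolding g_def W_def using w_int shifts
    by (simp add: set_integral_add set_integrable_mult_right algebra_simps)
  finally show ?thesis
    unfolding L2sq_def C_def V_def W_def by (simp add: algebra_simps)
qed

lemma BesselK_nonneg: "BesselK nu s \<ge> 0"
  unfolding BesselK_def set_lebesgue_integral_def
  by (intro mult_nonneg_nonneg Bochner_Integration.integral_nonneg) (auto simp: indicator_def)

lemma r_first_nonneg: "0 \<le> H \<Longrightarrow> 0 \<le> lam \<Longrightarrow> 0 \<le> tau \<Longrightarrow> 0 \<le> r_first H lam tau t"
  unfolding r_first_def by (intro mult_nonneg_nonneg divide_nonneg_nonneg BesselK_nonneg) auto

lemma r_second_nonneg: "0 \<le> H \<Longrightarrow> 0 \<le> lam \<Longrightarrow> 0 \<le> tau \<Longrightarrow> 0 \<le> t \<Longrightarrow> 0 \<le> r_second H lam tau t"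
  unfolding r_second_def by (intro mult_nonneg_nonneg divide_nonneg_nonneg BesselK_nonneg) auto

theorem mainTheorem2:
  fixes H lam tau h l L L' :: real
    and t :: "nat \<Rightarrow> real"
    and r :: "nat \<Rightarrow> real"
    and u :: "nat \<Rightarrow> real \<Rightarrow> real \<Rightarrow> real"
  assumes H: "0 < H" "H < 1" "H \<noteq> 1/2"
    and pos: "lam > 0" "tau > 0" "h > 0" "l > 0" "L > 0" "L' > 0"
    and tpos: "\<And>k. k \<ge> 1 \<Longrightarrow> t k > 0"
    and r_small: "H < 1/2 \<Longrightarrow> (\<forall>k. r k = r_first H lam tau (t (k+1)))"
    and r_large: "H > 1/2 \<Longrightarrow> (\<exists>k1. \<forall>k. r k =
        (if k \<le> k1 then r_first H lam tau (t (k+1)) else r_second H lam tau (t (k+1))))"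
    and meas: "\<And>k. (\<lambda>p. u k (fst p) (snd p)) \<in> borel_measurable (borel :: (real \<times> real) measure)"
    and sqint: "\<And>k. set_integrable lborel ({0..<L} \<times> {0..<L'}) (\<lambda>p. (u k (fst p) (snd p))\<^sup>2)"
    and perx: "\<And>k x y. u k (x + L) y = u k x y"
    and pery: "\<And>k x y. u k x (y + L') = u k x y"
    and scheme: "\<And>k x y.
        (1 + 2 * r k / h\<^sup>2 + 2 * r k / l\<^sup>2) * u (k+1) x y
        - r k / h\<^sup>2 * (u (k+1) (x + h) y + u (k+1) (x - h) y)
        - r k / l\<^sup>2 * (u (k+1) x (y + l) + u (k+1) x (y - l)) = u k x y"
  shows "\<forall>k. L2sq L L' (u k) \<le> L2sq L L' (u 0)"
proof -
  have r_choice: "r k = r_first H lam tau (t (k+1)) \<or> r k = r_second H lam tau (t (k+1))" for k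
  proof (cases "H < 1/2")
    case False
    with H(3) r_large obtain k1 where "\<forall>k. r k =
        (if k \<le> k1 then r_first H lam tau (t (k+1)) else r_second H lam tau (t (k+1)))"
      by force
    then show ?thesis by simp
  qed (use r_small in simp)
  have r_nonneg: "r k \<ge> 0" for k
    using r_choice[of k] r_first_nonneg[of H lam tau] r_second_nonneg[of H lam tau "t (k+1)"]
      tpos[of "k+1"] H pos by force
  have "L2sq L L' (u (Suc k)) \<le> L2sq L L' (u k)" for k
    using scheme[of k] r_nonneg[of k]
    by (intro L2sq_implicit_step_le[of "r k / h\<^sup>2" "r k / l\<^sup>2"] meas sqint perx pery pos)
      (auto simp: algebra_simps)
  then show ?thesis
    using lift_Suc_antimono_le[of "\<lambda>k. L2sq L L' (u k)"] by blast
qed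

end
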